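(* Let $\tau=\infty$ and let $(V,\mathcal{E})$ be the lookdown representation based on $(X_n)$, $(k_n)$. Suppose (i) $\#\{i:k_n(i)=0\}\le1$ for each $n$, and (ii) fixation occurs almost surely. Then $\rho(v)=1$ for every $v\in V$.
   Context: Data: $\tau=\infty$, positive integers $(X_n)_{n\ge0}$, vectors $k_n=(k_n(i))_{i=1}^{X_n}$ of nonnegative integers with $\sum_ik_n(i)=X_{n+1}$. $V_n=\{(n,i):1\le i\le X_n\}$, $V=\bigcup_nV_n$. Lookdown representation: for each $n$ fix a partition $\xi_n$ of $\{1,\dots,X_{n+1}\}$ whose block sizes are the nonzero entries of $k_n$; let $(\sigma_n)$ be independent uniform random permutations of $\{1,\dots,X_{n+1}\}$; let $\Xi_n=\{\sigma_n(A):A\in\xi_n\}$ with blocks listed in increasing order of least element as $B_1,\dots,B_{\ell_n}$; $\mathcal{E}_n=\bigcup_i\{((n,i),(n+1,j)):j\in B_i\}$, $\mathcal{E}=\bigcup_n\mathcal{E}_n$. For $v\in V_n$, $m\ge n$, $D_m(v)$ is the set of vertices of $V_m$ reachable from $v$ by a directed path in $\mathcal{E}$. Fixation means: for each $n$ there is $m>n$ such that $D_m(v)=\emptyset$ for all but one $v\in V_n$ (equivalently, when $\tau=\infty$, the graph has a unique infinite directed path from generation $0$). Identification probability: $\mathcal{P}$ = permutations of $V$ preserving each $V_n$; $\sigma\in\mathcal{P}$ uniform means its restrictions to the $V_n$ are independent uniform permutations; $\sigma(E)=\{(\sigma(v),\sigma(w)):(v,w)\in E\}$. With $\sigma$ uniform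 independent of $\mathcal{E}$, for $v\in V_n$, $\rho(v)=\mathbb{E}[\max_{w\in V_n}\mathbb{P}(\sigma(v)=w\mid\sigma(\mathcal{E}))]$. *)

theory Defs
  imports "HOL-Probability.Probability" "HOL-Library.Multiset"
begin

definition Vlev :: "(nat \<Rightarrow> nat) \<Rightarrow> nat \<Rightarrow> (nat \<times> nat) set" where
  "Vlev X n = {(n, i) | i. 1 \<le> i \<and> i \<le> X n}"

definition Vall :: "(nat \<Rightarrow> nat) \<Rightarrow> (nat \<times> nat) set" where
  "Vall X = (\<Union>n. Vlev X n)"

definition admissible_data :: "(nat \<Rightarrow> nat) \<Rightarrow> (nat \<Rightarrow> nat \<Rightarrow> nat) \<Rightarrow> bool" where
  "admissible_data X k \<longleftrightarrow>
     (\<forall>n. 0 < X n \<and> (\<Sum>i\<in>{1..X n}. k n i) = X (Suc n))"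

definition fixed_partitions ::
  "(nat \<Rightarrow> nat) \<Rightarrow> (nat \<Rightarrow> nat \<Rightarrow> nat) \<Rightarrow> (nat \<Rightarrow> nat set set) \<Rightarrow> bool" where
  "fixed_partitions X k xi \<longleftrightarrow>
     (\<forall>n. partition_on {1..X (Suc n)} (xi n) \<and>
          image_mset card (mset_set (xi n)) =
            filter_mset (\<lambda>c. c \<noteq> 0) (image_mset (k n) (mset_set {1..X n})))"

definition Xi :: "(nat \<Rightarrow> nat set set) \<Rightarrow> (nat \<Rightarrow> nat \<Rightarrow> nat) \<Rightarrow> nat \<Rightarrow> nat set set" where
  "Xi xi s n = (\<lambda>A. s n ` A) ` xi n"

text \<open>Index of a block B of Xi_n when the blocks are listed in increasing order of
  least element (B_1, B_2, ...).\<close>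
definition block_index :: "nat set set \<Rightarrow> nat set \<Rightarrow> nat" where
  "block_index P B = Suc (card {B' \<in> P. Min B' < Min B})"

definition lookdown_edges ::
  "(nat \<Rightarrow> nat set set) \<Rightarrow> (nat \<Rightarrow> nat \<Rightarrow> nat) \<Rightarrow> ((nat \<times> nat) \<times> (nat \<times> nat)) set" where
  "lookdown_edges xi s =
     {((n, i), (Suc n, j)) | n i j. \<exists>B \<in> Xi xi s n. j \<in> B \<and> i = block_index (Xi xi s n) B}"

definition Desc :: "((nat \<times> nat) \<times> (nat \<times> nat)) set \<Rightarrow> nat \<Rightarrow> nat \<times> nat \<Rightarrow> (nat \<times> nat) set" where
  "Desc E m v = {w. fst w = m \<and> (v, w) \<in> E\<^sup>*}"

definition fixation :: "(nat \<Rightarrow> nat) \<Rightarrow> ((nat \<times> nat) \<times> (nat \<times> nat)) set \<Rightarrow> bool" where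
  "fixation X E \<longleftrightarrow>
     (\<forall>n. \<exists>m>n. \<exists>v\<in>Vlev X n. \<forall>u\<in>Vlev X n. u \<noteq> v \<longrightarrow> Desc E m u = {})"

definition vperm :: "(nat \<Rightarrow> nat \<Rightarrow> nat) \<Rightarrow> nat \<times> nat \<Rightarrow> nat \<times> nat" where
  "vperm p v = (fst v, p (fst v) (snd v))"

definition relabel_edges ::
  "(nat \<Rightarrow> nat \<Rightarrow> nat) \<Rightarrow> ((nat \<times> nat) \<times> (nat \<times> nat)) set \<Rightarrow> ((nat \<times> nat) \<times> (nat \<times> nat)) set" where
  "relabel_edges p E = {(vperm p v, vperm p w) | v w. (v, w) \<in> E}"

text \<open>Underlying probability space: for each n independently, a uniform permutation
  sigma_n of {1..X(n+1)} (lookdown construction) and a uniform permutation of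
  {1..X n} (the relabelling sigma restricted to V_n), all independent.\<close>
definition omega :: "(nat \<Rightarrow> nat) \<Rightarrow> (nat \<Rightarrow> (nat \<Rightarrow> nat) \<times> (nat \<Rightarrow> nat)) measure" where
  "omega X = (\<Pi>\<^sub>M n\<in>UNIV. measure_pmf
      (pair_pmf (pmf_of_set {p. p permutes {1..X (Suc n)}})
                (pmf_of_set {p. p permutes {1..X n}})))"

definition rand_E :: "(nat \<Rightarrow> nat set set) \<Rightarrow> (nat \<Rightarrow> (nat \<Rightarrow> nat) \<times> (nat \<Rightarrow> nat))
    \<Rightarrow> ((nat \<times> nat) \<times> (nat \<times> nat)) set" where
  "rand_E xi \<omega> = lookdown_edges xi (\<lambda>n. fst (\<omega> n))"

definition rand_perm :: "(nat \<Rightarrow> (nat \<Rightarrow> nat) \<times> (nat \<Rightarrow> nat)) \<Rightarrow> nat \<Rightarrow> nat \<Rightarrow> nat" where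
  "rand_perm \<omega> = (\<lambda>n. snd (\<omega> n))"

text \<open>The sigma-algebra generated by the random edge set sigma(E) (product sigma-algebra
  on edge sets, i.e. generated by the events "e \<in> sigma(E)").\<close>
definition obs_algebra :: "(nat \<Rightarrow> nat) \<Rightarrow> (nat \<Rightarrow> nat set set)
    \<Rightarrow> (nat \<Rightarrow> (nat \<Rightarrow> nat) \<times> (nat \<Rightarrow> nat)) measure" where
  "obs_algebra X xi = sigma (space (omega X))
     {{\<omega> \<in> space (omega X). e \<in> relabel_edges (rand_perm \<omega>) (rand_E xi \<omega>)} | e. True}"

definition rho :: "(nat \<Rightarrow> nat) \<Rightarrow> (nat \<Rightarrow> nat set set) \<Rightarrow> nat \<times> nat \<Rightarrow> real" where
  "rho X xi v = (\<integral>\<omega>. Max ((\<lambda>w. real_cond_exp (omega X) (obs_algebra X xi)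
        (indicator {\<omega>' \<in> space (omega X). vperm (rand_perm \<omega>') v = w}) \<omega>) ` Vlev X (fst v))
      \<partial>omega X)"

end

theory Submission
  imports Defs
begin

text \<open>Under hypothesis (i) at most one vertex of each generation of the lookdown graph is
  childless, and it carries the largest label; every other vertex is ranked by the least label
  among its children. The labels of generation \<open>n\<close> can therefore be read off the unlabelled
  graph \<open>\<sigma>(E)\<close> by comparing two vertices through their descendants \<open>d\<close> generations later,
  and this comparison is correct as soon as at most one vertex of generation \<open>n\<close> has
  descendants that far. Fixation provides such a \<open>d\<close> almost surely, so \<open>\<sigma>(v)\<close> is almost
  surely a function of \<open>\<sigma>(E)\<close> and each conditional probability \<open>P(\<sigma>(v) = w | \<sigma>(E))\<close> is
  \<open>0\<close> or \<open>1\<close>.\<close>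

type_synonym edge_set = "((nat \<times> nat) \<times> (nat \<times> nat)) set"

section \<open>Recovering labels from an unlabelled graph\<close>

definition children ::
  "(nat \<Rightarrow> nat) \<Rightarrow> edge_set \<Rightarrow> nat \<Rightarrow> nat \<times> nat \<Rightarrow> (nat \<times> nat) set" where
  "children X H j x = {z \<in> Vlev X (Suc j). (x, z) \<in> H}"

fun survives ::
  "(nat \<Rightarrow> nat) \<Rightarrow> edge_set \<Rightarrow> nat \<Rightarrow> nat \<Rightarrow> nat \<times> nat \<Rightarrow> bool" where
  "survives X H 0 j x = True"
| "survives X H (Suc d) j x = (\<exists>c\<in>children X H j x. survives X H d (Suc j) c)"

text \<open>\<open>precedes X H d j x y\<close> guesses that \<open>x\<close> has the smaller label by looking \<open>d\<close> generations
  ahead: a childless vertex comes last, otherwise the comparison is passed to the children.\<close>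

fun precedes :: "(nat \<Rightarrow> nat) \<Rightarrow> edge_set \<Rightarrow> nat \<Rightarrow> nat
    \<Rightarrow> nat \<times> nat \<Rightarrow> nat \<times> nat \<Rightarrow> bool" where
  "precedes X H 0 j x y = False"
| "precedes X H (Suc d) j x y = (children X H j x \<noteq> {} \<and> (children X H j y = {} \<or>
      (\<exists>c\<in>children X H j x. \<forall>c'\<in>children X H j y. precedes X H d (Suc j) c c')))"

definition decoded_label ::
  "(nat \<Rightarrow> nat) \<Rightarrow> edge_set \<Rightarrow> nat \<Rightarrow> nat \<Rightarrow> nat \<times> nat \<Rightarrow> nat" where
  "decoded_label X H d j x = Suc (card {y \<in> Vlev X j. precedes X H d j y x})"

definition lineage_unique :: "(nat \<Rightarrow> nat) \<Rightarrow> edge_set \<Rightarrow> nat \<Rightarrow> nat \<Rightarrow> bool" where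
  "lineage_unique X H n d \<longleftrightarrow>
     (\<forall>y\<in>Vlev X n. \<forall>z\<in>Vlev X n. survives X H d n y \<and> survives X H d n z \<longrightarrow> y = z)"

lemma Vlev_eq_image: "Vlev X j = Pair j ` {1..X j}"
  by (auto simp: Vlev_def)

lemma finite_Vlev: "finite (Vlev X j)"
  by (simp add: Vlev_eq_image)

lemma fst_Vlev: "u \<in> Vlev X j \<Longrightarrow> fst u = j"
  by (auto simp: Vlev_def)

lemma children_subset_Vlev: "children X H j x \<subseteq> Vlev X (Suc j)"
  by (auto simp: children_def)

lemma finite_children: "finite (children X H j x)"
  using finite_subset[OF children_subset_Vlev finite_Vlev] .

lemma precedes_irrefl: "\<not> precedes X H d j x x"
  by (induction d arbitrary: j x) auto

lemma Min_image_less_Min_image_iff: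
  fixes T :: "'a \<Rightarrow> 'b :: linorder"
  assumes "finite A" "A \<noteq> {}" "finite B" "B \<noteq> {}"
  shows "Min (T ` A) < Min (T ` B) \<longleftrightarrow> (\<exists>a\<in>A. \<forall>b\<in>B. T a < T b)"
  using assms by (subst Min_less_iff) auto

text \<open>The rules obeyed by the labels \<open>T\<close> of a lookdown graph \<open>H\<close>, where \<open>H\<close> itself need not
  reveal \<open>T\<close>.\<close>

locale lookdown_order =
  fixes X :: "nat \<Rightarrow> nat" and H :: "edge_set" and T :: "nat \<times> nat \<Rightarrow> nat"
  assumes inj_on_T: "\<And>j. inj_on T (Vlev X j)"
    and T_image: "\<And>j. T ` Vlev X j = {1..X j}"
    and T_childless: "\<And>j x. x \<in> Vlev X j \<Longrightarrow> children X H j x = {} \<Longrightarrow> T x = X j"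
    and T_less_iff: "\<And>j x y. x \<in> Vlev X j \<Longrightarrow> y \<in> Vlev X j \<Longrightarrow>
        children X H j x \<noteq> {} \<Longrightarrow> children X H j y \<noteq> {} \<Longrightarrow>
        T x < T y \<longleftrightarrow> Min (T ` children X H j x) < Min (T ` children X H j y)"
    and children_disjoint: "\<And>j x y. x \<in> Vlev X j \<Longrightarrow> y \<in> Vlev X j \<Longrightarrow> x \<noteq> y \<Longrightarrow>
        children X H j x \<inter> children X H j y = {}"
begin

lemma T_le: "x \<in> Vlev X j \<Longrightarrow> T x \<le> X j"
  using T_image by fastforce

lemma precedes_iff_T_less:
  assumes "x \<in> Vlev X j" "y \<in> Vlev X j" "x \<noteq> y" "\<not> (survives X H d j x \<and> survives X H d j y)"
  shows "precedes X H d j x y \<longleftrightarrow> T x < T y"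
  using assms
proof (induction d arbitrary: j x y)
  case 0
  then show ?case by simp
next
  case (Suc d)
  note x = Suc.prems(1) and y = Suc.prems(2)
  have "T x \<noteq> T y" using inj_on_T Suc.prems(1-3) by (meson inj_on_contraD)
  consider "children X H j x = {}" | "children X H j y = {}"
    | (both) "children X H j x \<noteq> {}" "children X H j y \<noteq> {}" by blast
  then show ?case
  proof cases
    case (both)
    have IH: "precedes X H d (Suc j) c c' \<longleftrightarrow> T c < T c'"
      if "c \<in> children X H j x" "c' \<in> children X H j y" for c c'
      using that Suc.prems children_disjoint[OF x y] children_subset_Vlev[THEN subsetD]
      by (intro Suc.IH) (auto simp del: survives.simps(1))
    have "precedes X H (Suc d) j x y \<longleftrightarrow>
        (\<exists>c\<in>children X H j x. \<forall>c'\<in>children X H j y. T c < T c')"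
      using both IH by auto
    also have "\<dots> \<longleftrightarrow> Min (T ` children X H j x) < Min (T ` children X H j y)"
      using both finite_children by (intro Min_image_less_Min_image_iff[symmetric]) auto
    also have "\<dots> \<longleftrightarrow> T x < T y" using T_less_iff[OF x y both] by simp
    finally show ?thesis .
  qed (use \<open>T x \<noteq> T y\<close> T_childless[OF x] T_childless[OF y] T_le[OF x] T_le[OF y] in auto)
qed

lemma decoded_label_eq_T:
  assumes x: "x \<in> Vlev X j" and unique: "lineage_unique X H j d"
  shows "decoded_label X H d j x = T x"
proof -
  have "{y \<in> Vlev X j. precedes X H d j y x} = {y \<in> Vlev X j. T y < T x}"
    using precedes_iff_T_less[OF _ x] precedes_irrefl unique x
    unfolding lineage_unique_def by blast
  also have "card \<dots> = card {t \<in> {1..X j}. t < T x}"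
  proof -
    have "{t \<in> {1..X j}. t < T x} = T ` {y \<in> Vlev X j. T y < T x}"
      using T_image[of j] by auto
    moreover have "inj_on T {y \<in> Vlev X j. T y < T x}"
      using inj_on_T by (rule inj_on_subset) auto
    ultimately show ?thesis by (simp add: card_image)
  qed
  also have "{t \<in> {1..X j}. t < T x} = {1..<T x}" using T_le[OF x] by auto
  finally have "card {y \<in> Vlev X j. precedes X H d j y x} = T x - 1" by simp
  moreover have "T x \<in> {1..X j}" using x T_image[of j] by blast
  ultimately show ?thesis unfolding decoded_label_def by simp
qed

end

section \<open>The lookdown graph obeys the labelling rules\<close>

lemma block_index_less:
  assumes "finite P" "B \<in> P" "B' \<in> P" "Min B < Min B'"
  shows "block_index P B < block_index P B'"
proof -
  have "{C \<in> P. Min C < Min B} \<subset> {C \<in> P. Min C < Min B'}"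
    using assms(2,4) by auto
  then show ?thesis
    using assms(1) by (auto simp: block_index_def intro: psubset_card_mono)
qed

lemma Min_eq_imp_eq_block:
  assumes "\<forall>C\<in>P. finite C \<and> C \<noteq> {}" "disjoint P" "B \<in> P" "B' \<in> P" "Min B = Min B'"
  shows "B = B'"
proof (rule ccontr)
  assume "B \<noteq> B'"
  then have "B \<inter> B' = {}" using disjointD[OF assms(2,3,4)] by simp
  moreover have "Min B \<in> B" "Min B' \<in> B'" using assms(1,3,4) by auto
  ultimately show False using assms(5) by auto
qed

lemma block_index_less_iff:
  assumes "finite P" "\<forall>C\<in>P. finite C \<and> C \<noteq> {}" "disjoint P" "B \<in> P" "B' \<in> P"
  shows "block_index P B < block_index P B' \<longleftrightarrow> Min B < Min B'"
proof (cases "Min B = Min B'")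
  case True
  then show ?thesis using Min_eq_imp_eq_block[OF assms(2-5)] by simp
next
  case False
  then show ?thesis using block_index_less[OF assms(1,4,5)] block_index_less[OF assms(1,5,4)]
    by (meson less_asym linorder_neqE_nat)
qed

lemma inj_on_block_index:
  assumes "finite P" "\<forall>C\<in>P. finite C \<and> C \<noteq> {}" "disjoint P"
  shows "inj_on (block_index P) P"
proof (rule inj_onI)
  fix B B' assume "B \<in> P" "B' \<in> P" "block_index P B = block_index P B'"
  then have "\<not> Min B < Min B'" "\<not> Min B' < Min B"
    using block_index_less_iff[OF assms] by (metis less_irrefl)+
  then show "B = B'" using Min_eq_imp_eq_block[OF assms(2,3) \<open>B \<in> P\<close> \<open>B' \<in> P\<close>] by simp
qed

lemma block_index_image:
  assumes "finite P" "\<forall>C\<in>P. finite C \<and> C \<noteq> {}" "disjoint P"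
  shows "block_index P ` P = {1..card P}"
proof (rule card_subset_eq)
  show "block_index P ` P \<subseteq> {1..card P}"
  proof
    fix x assume "x \<in> block_index P ` P"
    then obtain B where B: "B \<in> P" and x: "x = block_index P B" by blast
    have "card {C \<in> P. Min C < Min B} \<le> card (P - {B})"
      using assms(1) by (intro card_mono) auto
    moreover have "card (P - {B}) = card P - 1" "0 < card P"
      using B assms(1) by (auto simp: card_gt_0_iff)
    ultimately show "x \<in> {1..card P}" unfolding x block_index_def by simp
  qed
  show "card (block_index P ` P) = card {1..card P}"
    using inj_on_block_index[OF assms] by (simp add: card_image)
qed simp

locale lookdown =
  fixes X :: "nat \<Rightarrow> nat" and k :: "nat \<Rightarrow> nat \<Rightarrow> nat" and xi :: "nat \<Rightarrow> nat set set"
    and s :: "nat \<Rightarrow> nat \<Rightarrow> nat"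
  assumes partitions: "fixed_partitions X k xi"
    and at_most_one_zero: "\<And>n. card {i \<in> {1..X n}. k n i = 0} \<le> 1"
    and s_permutes: "\<And>n. s n permutes {1..X (Suc n)}"
begin

abbreviation "P n \<equiv> Xi xi s n"
abbreviation "E \<equiv> lookdown_edges xi s"

lemma partition_on_xi: "partition_on {1..X (Suc n)} (xi n)"
  using partitions by (simp add: fixed_partitions_def)

lemma finite_P: "finite (P n)"
  using partition_on_xi[of n] by (simp add: Xi_def finite_UnionD partition_on_def)

lemma P_block:
  assumes "B \<in> P n"
  shows "B \<subseteq> {1..X (Suc n)} \<and> B \<noteq> {} \<and> finite B"
proof -
  obtain A where A: "A \<in> xi n" and B: "B = s n ` A" using assms by (auto simp: Xi_def)
  have "A \<subseteq> {1..X (Suc n)}" "A \<noteq> {}"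
    using partition_on_xi[of n] A by (auto simp: partition_on_def)
  then show ?thesis
    using permutes_image[OF s_permutes[of n]] finite_subset unfolding B by fastforce
qed

lemma P_blocks: "\<forall>B\<in>P n. finite B \<and> B \<noteq> {}"
  using P_block by blast

lemma disjoint_P: "disjoint (P n)"
  using partition_on_xi[of n] permutes_inj[OF s_permutes[of n]] unfolding Xi_def partition_on_def
  by (intro disjoint_image) (auto intro: inj_on_subset)

lemma card_P: "card (P n) = card (xi n)"
proof -
  have "inj (image (s n))" using permutes_inj[OF s_permutes[of n]]
    by (simp add: inj_def inj_image_eq_iff)
  then show ?thesis unfolding Xi_def by (simp add: card_image inj_on_subset)
qed

text \<open>Hypothesis (i): the blocks of \<open>\<xi>\<^sub>n\<close> correspond to the nonzero entries of \<open>k\<^sub>n\<close>, of which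
  there are at least \<open>X\<^sub>n - 1\<close>.\<close>

lemma card_xi_ge: "X n - 1 \<le> card (xi n)"
proof -
  have "card (xi n) = size (image_mset card (mset_set (xi n)))" by simp
  also have "\<dots> = card {i \<in> {1..X n}. k n i \<noteq> 0}"
    using partitions by (simp add: fixed_partitions_def filter_mset_image_mset)
  finally have "card (xi n) = card {i \<in> {1..X n}. k n i \<noteq> 0}" .
  moreover have "card {i \<in> {1..X n}. k n i \<noteq> 0} + card {i \<in> {1..X n}. k n i = 0} = X n"
  proof -
    have "{1..X n} = {i \<in> {1..X n}. k n i \<noteq> 0} \<union> {i \<in> {1..X n}. k n i = 0}" by auto
    then show ?thesis by (metis (no_types, lifting) card_Un_disjoint card_atLeastAtMost
        diff_Suc_1 disjoint_iff finite_Un finite_atLeastAtMost mem_Collect_eq)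
  qed
  ultimately show ?thesis using at_most_one_zero[of n] by linarith
qed

lemma children_E: "children X E n (n, i) = {(Suc n, j) | j. \<exists>B\<in>P n. j \<in> B \<and> i = block_index (P n) B}"
  using P_block unfolding children_def lookdown_edges_def by (force simp: Vlev_def)

lemma children_E_block:
  assumes "B \<in> P n" "block_index (P n) B = i"
  shows "snd ` children X E n (n, i) = B"
  using assms inj_on_block_index[OF finite_P P_blocks disjoint_P, of n]
  unfolding children_E by (force dest: inj_onD)

lemma block_of_children_E:
  assumes "children X E n (n, i) \<noteq> {}"
  obtains B where "B \<in> P n" "block_index (P n) B = i"
  using assms unfolding children_E by auto

lemma childless_E:
  assumes u: "(n, i) \<in> Vlev X n" and childless: "children X E n (n, i) = {}"
  shows "i = X n"
proof -
  have i: "1 \<le> i" "i \<le> X n" using u by (auto simp: Vlev_def)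
  have "\<not> i \<le> card (P n)"
  proof
    assume "i \<le> card (P n)"
    then obtain B where "B \<in> P n" "block_index (P n) B = i"
      using block_index_image[OF finite_P P_blocks disjoint_P, of n] i by (metis atLeastAtMost_iff imageE)
    then show False using children_E_block childless P_block by fastforce
  qed
  then show ?thesis using card_P[of n] card_xi_ge[of n] i by linarith
qed

lemma less_iff_children_E:
  assumes "children X E n (n, i) \<noteq> {}" "children X E n (n, i') \<noteq> {}"
  shows "i < i' \<longleftrightarrow> Min (snd ` children X E n (n, i)) < Min (snd ` children X E n (n, i'))"
proof -
  obtain B where B: "B \<in> P n" "block_index (P n) B = i" using assms(1) by (rule block_of_children_E)
  obtain B' where B': "B' \<in> P n" "block_index (P n) B' = i'" using assms(2) by (rule block_of_children_E)
  show ?thesis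
    using block_index_less_iff[OF finite_P P_blocks disjoint_P B(1) B'(1)] children_E_block B B'
    by simp
qed

lemma children_E_disjoint:
  assumes "i \<noteq> i'"
  shows "children X E n (n, i) \<inter> children X E n (n, i') = {}"
  using assms disjoint_P[of n] unfolding children_E by (auto dest: disjointD)

end

section \<open>Decoding the relabelled lookdown graph\<close>

lemma survives_Desc_nonempty:
  assumes "u \<in> Vlev X j" "survives X H d j u"
  shows "Desc H (j + d) u \<noteq> {}"
  using assms
proof (induction d arbitrary: j u)
  case 0
  then have "u \<in> Desc H (j + 0) u" by (auto simp: Desc_def Vlev_def)
  then show ?case by blast
next
  case (Suc d)
  then obtain c where c: "c \<in> children X H j u" "survives X H d (Suc j) c" by auto
  then have "c \<in> Vlev X (Suc j)" "(u, c) \<in> H" by (auto simp: children_def)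
  with Suc.IH c(2) obtain w where "fst w = Suc j + d" "(c, w) \<in> H\<^sup>*"
    unfolding Desc_def by blast
  with \<open>(u, c) \<in> H\<close> have "w \<in> Desc H (j + Suc d) u"
    by (auto simp: Desc_def intro: converse_rtrancl_into_rtrancl)
  then show ?case by blast
qed

locale relabelled_lookdown = lookdown +
  fixes p :: "nat \<Rightarrow> nat \<Rightarrow> nat"
  assumes p_permutes: "\<And>n. p n permutes {1..X n}"
begin

abbreviation "G \<equiv> relabel_edges p E"

text \<open>The hidden label of a vertex of \<open>G\<close> is its label in \<open>E\<close>.\<close>

definition hidden_label :: "nat \<times> nat \<Rightarrow> nat" where
  "hidden_label x = inv (p (fst x)) (snd x)"

lemma inj_vperm: "inj (vperm p)"
  by (intro injI) (auto simp: vperm_def prod_eq_iff inj_eq[OF permutes_inj[OF p_permutes]])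

lemma vperm_in_Vlev_iff: "vperm p u \<in> Vlev X j \<longleftrightarrow> u \<in> Vlev X j"
  using permutes_in_image[OF p_permutes] by (cases u) (auto simp: vperm_def Vlev_def)

lemma vperm_inv: "vperm p (fst x, inv (p (fst x)) (snd x)) = x"
  by (simp add: vperm_def permutes_inverses[OF p_permutes])

lemma vperm_Vlev: "vperm p ` Vlev X j = Vlev X j"
proof
  show "Vlev X j \<subseteq> vperm p ` Vlev X j"
  proof
    fix x assume "x \<in> Vlev X j"
    then have "(fst x, inv (p (fst x)) (snd x)) \<in> Vlev X j"
      using vperm_in_Vlev_iff[of "(fst x, inv (p (fst x)) (snd x))"] by (simp only: vperm_inv)
    then show "x \<in> vperm p ` Vlev X j" by (rule rev_image_eqI) (rule vperm_inv[symmetric])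
  qed
  show "vperm p ` Vlev X j \<subseteq> Vlev X j"
    using vperm_in_Vlev_iff by blast
qed

lemma obtain_vperm:
  assumes "x \<in> Vlev X j"
  obtains i where "(j, i) \<in> Vlev X j" "x = vperm p (j, i)"
proof -
  from assms have "x \<in> vperm p ` Vlev X j" by (simp only: vperm_Vlev)
  then obtain u where u: "u \<in> Vlev X j" "x = vperm p u" by (rule imageE)
  moreover obtain i where "u = (j, i)" using u(1) by (auto simp: Vlev_def)
  ultimately show thesis using that by simp
qed

lemma hidden_label_vperm: "hidden_label (vperm p u) = snd u"
  by (simp add: hidden_label_def vperm_def permutes_inverses[OF p_permutes])

lemma children_G: "children X G j (vperm p u) = vperm p ` children X E j u"
proof -
  have edge_G: "(vperm p u, z) \<in> G \<longleftrightarrow> (\<exists>b. (u, b) \<in> E \<and> z = vperm p b)" for z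
  proof
    assume "(vperm p u, z) \<in> G"
    then obtain a b where "vperm p u = vperm p a" "z = vperm p b" "(a, b) \<in> E"
      unfolding relabel_edges_def by blast
    then show "\<exists>b. (u, b) \<in> E \<and> z = vperm p b" using injD[OF inj_vperm] by metis
  next
    assume "\<exists>b. (u, b) \<in> E \<and> z = vperm p b"
    then show "(vperm p u, z) \<in> G" unfolding relabel_edges_def by blast
  qed
  show ?thesis unfolding children_def by (auto simp: edge_G vperm_in_Vlev_iff)
qed

lemma survives_G: "survives X G d j (vperm p u) \<longleftrightarrow> survives X E d j u"
  by (induction d arbitrary: j u) (auto simp: children_G)

lemma lookdown_order_G: "lookdown_order X G hidden_label"
proof
  fix j
  show "inj_on hidden_label (Vlev X j)"
  proof (rule inj_onI)
    fix x y assume "x \<in> Vlev X j" "y \<in> Vlev X j" "hidden_label x = hidden_label y"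
    moreover obtain i i' where "x = vperm p (j, i)" "y = vperm p (j, i')"
      using \<open>x \<in> Vlev X j\<close> \<open>y \<in> Vlev X j\<close> by (metis obtain_vperm)
    ultimately show "x = y" by (simp add: hidden_label_vperm)
  qed
  have "hidden_label ` Vlev X j = hidden_label ` vperm p ` Vlev X j" by (simp add: vperm_Vlev)
  also have "\<dots> = {1..X j}" by (simp add: Vlev_eq_image image_image hidden_label_vperm)
  finally show "hidden_label ` Vlev X j = {1..X j}" .
next
  fix j x assume "x \<in> Vlev X j" "children X G j x = {}"
  moreover obtain i where "(j, i) \<in> Vlev X j" "x = vperm p (j, i)"
    using \<open>x \<in> Vlev X j\<close> by (rule obtain_vperm)
  ultimately show "hidden_label x = X j"
    by (simp add: children_G hidden_label_vperm childless_E)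
next
  fix j x y assume "x \<in> Vlev X j" "y \<in> Vlev X j"
    and "children X G j x \<noteq> {}" "children X G j y \<noteq> {}"
  moreover obtain i i' where "x = vperm p (j, i)" "y = vperm p (j, i')"
    using \<open>x \<in> Vlev X j\<close> \<open>y \<in> Vlev X j\<close> by (metis obtain_vperm)
  moreover have "hidden_label ` children X G j (vperm p w) = snd ` children X E j w" for w
    by (simp add: children_G image_image hidden_label_vperm)
  ultimately show "hidden_label x < hidden_label y \<longleftrightarrow>
      Min (hidden_label ` children X G j x) < Min (hidden_label ` children X G j y)"
    by (simp add: children_G hidden_label_vperm less_iff_children_E)
next
  fix j x y assume "x \<in> Vlev X j" "y \<in> Vlev X j" "x \<noteq> y"
  moreover obtain i i' where "x = vperm p (j, i)" "y = vperm p (j, i')"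
    using \<open>x \<in> Vlev X j\<close> \<open>y \<in> Vlev X j\<close> by (metis obtain_vperm)
  ultimately have "i \<noteq> i'" "x = vperm p (j, i)" "y = vperm p (j, i')" by auto
  then show "children X G j x \<inter> children X G j y = {}"
    using children_E_disjoint[of i i' j] by (simp add: children_G image_Int[OF inj_vperm, symmetric])
qed

lemma fixation_imp_lineage_unique:
  assumes "fixation X E"
  shows "\<exists>d. lineage_unique X G n d"
proof -
  obtain m v where "m > n" and D: "\<forall>u\<in>Vlev X n. u \<noteq> v \<longrightarrow> Desc E m u = {}"
    using assms unfolding fixation_def by blast
  have survivor: "vperm p u = vperm p v"
    if "vperm p u \<in> Vlev X n" "survives X G (m - n) n (vperm p u)" for u
    using survives_Desc_nonempty[of u X n E "m - n"] survives_G D that \<open>m > n\<close>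
    by (auto simp: vperm_in_Vlev_iff)
  have "lineage_unique X G n (m - n)"
    unfolding lineage_unique_def
  proof (intro ballI impI)
    fix y z assume "y \<in> Vlev X n" "z \<in> Vlev X n"
      and "survives X G (m - n) n y \<and> survives X G (m - n) n z"
    moreover obtain i i' where "y = vperm p (n, i)" "z = vperm p (n, i')"
      using \<open>y \<in> Vlev X n\<close> \<open>z \<in> Vlev X n\<close> by (metis obtain_vperm)
    ultimately show "y = z" using survivor by metis
  qed
  then show ?thesis by blast
qed

lemma decoded_label_iff:
  assumes v: "v \<in> Vlev X n" and w: "w \<in> Vlev X n" and unique: "lineage_unique X G n d"
  shows "vperm p v = w \<longleftrightarrow> decoded_label X G d n w = snd v"
proof -
  interpret lookdown_order X G hidden_label by (rule lookdown_order_G)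
  obtain i where w_eq: "w = vperm p (n, i)" using w by (rule obtain_vperm)
  have "vperm p v = w \<longleftrightarrow> v = (n, i)" using inj_vperm by (auto simp: w_eq dest: injD)
  also have "\<dots> \<longleftrightarrow> i = snd v" using fst_Vlev[OF v] by (auto simp: prod_eq_iff)
  finally have "vperm p v = w \<longleftrightarrow> i = snd v" .
  then show ?thesis using decoded_label_eq_T[OF w unique] w_eq hidden_label_vperm by simp
qed

end

section \<open>The decoded labels are observable\<close>

definition edges_upto :: "(nat \<Rightarrow> nat) \<Rightarrow> nat \<Rightarrow> edge_set" where
  "edges_upto X N = (\<Union>j<N. Vlev X j \<times> Vlev X (Suc j))"

lemma finite_edges_upto: "finite (edges_upto X N)"
  by (auto simp: edges_upto_def finite_Vlev)

lemma children_cong: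
  assumes "H \<inter> edges_upto X N = H' \<inter> edges_upto X N" "j < N" "x \<in> Vlev X j"
  shows "children X H j x = children X H' j x"
proof -
  have "(x, z) \<in> edges_upto X N" if "z \<in> Vlev X (Suc j)" for z
    using assms(2,3) that unfolding edges_upto_def by blast
  then have "(x, z) \<in> H \<longleftrightarrow> (x, z) \<in> H'" if "z \<in> Vlev X (Suc j)" for z
    using that equalityD1[OF assms(1)] equalityD2[OF assms(1)] by blast
  then show ?thesis unfolding children_def by auto
qed

lemma survives_cong:
  assumes "H \<inter> edges_upto X (j + d) = H' \<inter> edges_upto X (j + d)" "x \<in> Vlev X j"
  shows "survives X H d j x = survives X H' d j x"
  using assms
proof (induction d arbitrary: j x)
  case (Suc d)
  have "children X H j x = children X H' j x"
    using children_cong[OF Suc.prems(1) _ Suc.prems(2)] by simp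
  moreover have "survives X H d (Suc j) c = survives X H' d (Suc j) c" if "c \<in> children X H j x" for c
    using Suc.IH[of "Suc j" c] Suc.prems(1) children_subset_Vlev[THEN subsetD, OF that] by simp
  ultimately show ?case by simp
qed simp

lemma precedes_cong:
  assumes "H \<inter> edges_upto X (j + d) = H' \<inter> edges_upto X (j + d)" "x \<in> Vlev X j" "y \<in> Vlev X j"
  shows "precedes X H d j x y = precedes X H' d j x y"
  using assms
proof (induction d arbitrary: j x y)
  case (Suc d)
  have "children X H j x = children X H' j x" "children X H j y = children X H' j y"
    using children_cong[OF Suc.prems(1) _ Suc.prems(2)] children_cong[OF Suc.prems(1) _ Suc.prems(3)]
    by simp_all
  moreover have "precedes X H d (Suc j) c c' = precedes X H' d (Suc j) c c'"
    if "c \<in> children X H j x" "c' \<in> children X H j y" for c c'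
    using Suc.IH[of "Suc j" c c'] Suc.prems(1) children_subset_Vlev[THEN subsetD, OF that(1)]
      children_subset_Vlev[THEN subsetD, OF that(2)] by simp
  ultimately show ?case by simp
qed simp

lemma decoded_label_cong:
  assumes "H \<inter> edges_upto X (j + d) = H' \<inter> edges_upto X (j + d)" "x \<in> Vlev X j"
  shows "decoded_label X H d j x = decoded_label X H' d j x"
  using precedes_cong[OF assms(1) _ assms(2)] unfolding decoded_label_def
  by (intro arg_cong[where f = "\<lambda>A. Suc (card A)"] Collect_cong) auto

lemma lineage_unique_cong:
  assumes "H \<inter> edges_upto X (n + d) = H' \<inter> edges_upto X (n + d)"
  shows "lineage_unique X H n d = lineage_unique X H' n d"
  using survives_cong[OF assms] unfolding lineage_unique_def by blast

definition decodes_to ::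
  "(nat \<Rightarrow> nat) \<Rightarrow> nat \<Rightarrow> nat \<Rightarrow> nat \<times> nat \<Rightarrow> edge_set \<Rightarrow> bool" where
  "decodes_to X n i w H \<longleftrightarrow> (\<exists>d. lineage_unique X H n d \<and> decoded_label X H d n w = i)"

text \<open>A decoding inspects only finitely many edges, which makes it measurable with respect to
  the observation.\<close>

lemma decodes_to_iff_finite_window:
  assumes "w \<in> Vlev X n"
  shows "decodes_to X n i w H \<longleftrightarrow> (\<exists>d. \<exists>S\<in>Pow (edges_upto X (n + d)).
     (lineage_unique X S n d \<and> decoded_label X S d n w = i) \<and>
     (\<forall>e\<in>edges_upto X (n + d). e \<in> H \<longleftrightarrow> e \<in> S))"
proof
  assume "decodes_to X n i w H"
  then obtain d where d: "lineage_unique X H n d" "decoded_label X H d n w = i"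
    by (auto simp: decodes_to_def)
  let ?S = "H \<inter> edges_upto X (n + d)"
  have agree: "H \<inter> edges_upto X (n + d) = ?S \<inter> edges_upto X (n + d)" by blast
  show "\<exists>d. \<exists>S\<in>Pow (edges_upto X (n + d)).
     (lineage_unique X S n d \<and> decoded_label X S d n w = i) \<and>
     (\<forall>e\<in>edges_upto X (n + d). e \<in> H \<longleftrightarrow> e \<in> S)"
    using d lineage_unique_cong[OF agree] decoded_label_cong[OF agree assms]
    by (intro exI[of _ d] bexI[of _ ?S]) auto
next
  assume "\<exists>d. \<exists>S\<in>Pow (edges_upto X (n + d)).
     (lineage_unique X S n d \<and> decoded_label X S d n w = i) \<and>
     (\<forall>e\<in>edges_upto X (n + d). e \<in> H \<longleftrightarrow> e \<in> S)"
  then obtain d S where S: "S \<subseteq> edges_upto X (n + d)" "lineage_unique X S n d"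
    "decoded_label X S d n w = i" "\<forall>e\<in>edges_upto X (n + d). e \<in> H \<longleftrightarrow> e \<in> S"
    by blast
  then have agree: "H \<inter> edges_upto X (n + d) = S \<inter> edges_upto X (n + d)" by blast
  show "decodes_to X n i w H"
    unfolding decodes_to_def
    using S lineage_unique_cong[OF agree] decoded_label_cong[OF agree assms] by auto
qed

context relabelled_lookdown
begin

lemma vperm_eq_iff_decodes_to:
  assumes "fixation X E" "v \<in> Vlev X n" "w \<in> Vlev X n"
  shows "vperm p v = w \<longleftrightarrow> decodes_to X n (snd v) w G"
proof -
  obtain d where "lineage_unique X G n d" using fixation_imp_lineage_unique[OF assms(1)] by blast
  then show ?thesis
    unfolding decodes_to_def using decoded_label_iff[OF assms(2,3)] by blast
qed

end

definition observed_graph ::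
  "(nat \<Rightarrow> nat set set) \<Rightarrow> (nat \<Rightarrow> (nat \<Rightarrow> nat) \<times> (nat \<Rightarrow> nat)) \<Rightarrow> edge_set" where
  "observed_graph xi \<omega> = relabel_edges (rand_perm \<omega>) (rand_E xi \<omega>)"

lemma prob_space_omega: "prob_space (omega X)"
  unfolding omega_def by (rule prob_space_PiM) (simp add: prob_space_measure_pmf)

lemma pred_omega_component: "Measurable.pred (omega X) (\<lambda>\<omega>. R (\<omega> a))"
  unfolding omega_def by (rule pred_sets1[OF _ measurable_component_singleton]) auto

lemma observed_graph_edge_iff: "((a, i), (b, j)) \<in> observed_graph xi \<omega> \<longleftrightarrow>
  (\<exists>i' j'. (b = Suc a \<and> (\<exists>B\<in>(\<lambda>A. fst (\<omega> a) ` A) ` xi a.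
        j' \<in> B \<and> i' = block_index ((\<lambda>A. fst (\<omega> a) ` A) ` xi a) B) \<and> snd (\<omega> a) i' = i) \<and>
      snd (\<omega> b) j' = j)"
  unfolding observed_graph_def relabel_edges_def rand_E_def rand_perm_def lookdown_edges_def
    vperm_def Xi_def
  by force

lemma sets_observed_edge: "{\<omega> \<in> space (omega X). e \<in> observed_graph xi \<omega>} \<in> sets (omega X)"
proof -
  obtain a i b j where e: "e = ((a, i), (b, j))" by (metis prod.collapse)
  show ?thesis
    unfolding e observed_graph_edge_iff
    by (rule predE) (intro pred_intros_countable pred_intros_logic pred_omega_component)
qed

lemma subalgebra_obs_algebra: "subalgebra (omega X) (obs_algebra X xi)"
proof -
  let ?A = "{{\<omega> \<in> space (omega X). e \<in> relabel_edges (rand_perm \<omega>) (rand_E xi \<omega>)} | e. True}"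
  have "?A \<subseteq> Pow (space (omega X))" "?A \<subseteq> sets (omega X)"
    using sets_observed_edge[of X _ xi] by (auto simp: observed_graph_def)
  then show ?thesis unfolding subalgebra_def obs_algebra_def by (simp add: sets.sigma_sets_subset)
qed

lemma pred_obs_observed_edge: "Measurable.pred (obs_algebra X xi) (\<lambda>\<omega>. e \<in> observed_graph xi \<omega>)"
proof -
  have "{\<omega> \<in> space (omega X). e \<in> observed_graph xi \<omega>} \<in> sets (obs_algebra X xi)"
    unfolding obs_algebra_def observed_graph_def
    by (rule in_measure_of, blast) (rule CollectI, rule exI[of _ e], simp)
  moreover have "space (obs_algebra X xi) = space (omega X)"
    using subalgebra_obs_algebra by (simp add: subalgebra_def)
  ultimately show ?thesis by (simp add: pred_def)
qed

lemma sets_obs_decodes_to: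
  assumes "w \<in> Vlev X n"
  shows "{\<omega> \<in> space (omega X). decodes_to X n i w (observed_graph xi \<omega>)} \<in> sets (obs_algebra X xi)"
proof -
  have "Measurable.pred (obs_algebra X xi) (\<lambda>\<omega>. decodes_to X n i w (observed_graph xi \<omega>))"
    unfolding decodes_to_iff_finite_window[OF assms]
    by (intro pred_intros_countable pred_intros_finite pred_intros_logic pred_obs_observed_edge
        finite_edges_upto finite_Pow_iff[THEN iffD2]) (simp_all add: pred_def)
  moreover have "space (obs_algebra X xi) = space (omega X)"
    using subalgebra_obs_algebra by (simp add: subalgebra_def)
  ultimately show ?thesis by (simp add: pred_def)
qed

lemma AE_omega_permutes:
  "AE \<omega> in omega X. \<forall>n. fst (\<omega> n) permutes {1..X (Suc n)} \<and> snd (\<omega> n) permutes {1..X n}"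
proof -
  have "set_pmf (pmf_of_set {p. p permutes S}) = {p. p permutes S}" if "finite S" for S :: "nat set"
    using finite_permutations[OF that] by (intro set_pmf_of_set) (auto intro: permutes_id)
  then have "AE \<omega> in omega X. fst (\<omega> n) permutes {1..X (Suc n)} \<and> snd (\<omega> n) permutes {1..X n}" for n
    unfolding omega_def
    by (intro AE_PiM_component[where P = "\<lambda>x. fst x permutes {1..X (Suc n)} \<and> snd x permutes {1..X n}"])
      (auto simp: prob_space_measure_pmf intro!: AE_pmfI)
  then show ?thesis by (simp add: AE_all_countable)
qed

section \<open>Identification probability\<close>

lemma (in prob_space) integral_Max_cond_prob_eq_1:
  assumes F: "subalgebra M F" and W: "finite W"
    and Y: "\<And>w. {x \<in> space M. Y x = w} \<in> sets M"
    and S: "\<And>w. w \<in> W \<Longrightarrow> S w \<in> sets F"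
    and determined: "AE x in M. Y x \<in> W \<and> (\<forall>w\<in>W. Y x = w \<longleftrightarrow> x \<in> S w)"
  shows "(\<integral>x. Max ((\<lambda>w. real_cond_exp M F (indicator {y \<in> space M. Y y = w}) x) ` W) \<partial>M) = 1"
proof -
  interpret finite_measure_subalgebra M F by unfold_locales (rule F)
  have "AE x in M. \<forall>w\<in>W. real_cond_exp M F (indicator {y \<in> space M. Y y = w}) x = indicator (S w) x"
  proof (rule AE_finite_allI[OF W])
    fix w assume w: "w \<in> W"
    have S_M: "S w \<in> sets M" using S[OF w] F by (auto simp: subalgebra_def)
    have "AE x in M. indicator {y \<in> space M. Y y = w} x = (indicator (S w) x :: real)"
      using determined AE_space by eventually_elim (use w in \<open>auto simp: indicator_def\<close>)
    then have "AE x in M. real_cond_exp M F (indicator {y \<in> space M. Y y = w}) x =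
        real_cond_exp M F (indicator (S w)) x"
      using Y S_M by (intro real_cond_exp_cong) auto
    moreover have "AE x in M. real_cond_exp M F (indicator (S w)) x = indicator (S w) x"
      using S[OF w] S_M
      by (intro real_cond_exp_F_meas integrable_real_indicator) (auto simp: less_top[symmetric])
    ultimately show "AE x in M. real_cond_exp M F (indicator {y \<in> space M. Y y = w}) x =
        indicator (S w) x"
      by eventually_elim simp
  qed
  then have "AE x in M. Max ((\<lambda>w. real_cond_exp M F (indicator {y \<in> space M. Y y = w}) x) ` W) = 1"
    using determined
  proof eventually_elim
    case (elim x)
    then have val: "real_cond_exp M F (indicator {y \<in> space M. Y y = w}) x = (if Y x = w then 1 else 0)"
      if "w \<in> W" for w
      using that by (auto simp: indicator_def)
    show ?case
    proof (rule Max_eqI)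
      show "1 \<in> (\<lambda>w. real_cond_exp M F (indicator {y \<in> space M. Y y = w}) x) ` W"
        using elim val[of "Y x"] by (intro rev_image_eqI[of "Y x"]) auto
    qed (use W val in auto)
  qed
  then have "(\<integral>x. Max ((\<lambda>w. real_cond_exp M F (indicator {y \<in> space M. Y y = w}) x) ` W) \<partial>M) =
      (\<integral>x. 1 \<partial>M)"
    using W by (intro integral_cong_AE borel_measurable_Max borel_measurable_cond_exp2) auto
  then show ?thesis by (simp add: prob_space)
qed

theorem proposition2p3:
  fixes X :: "nat \<Rightarrow> nat" and k :: "nat \<Rightarrow> nat \<Rightarrow> nat" and xi :: "nat \<Rightarrow> nat set set"
  assumes "admissible_data X k"
    and "fixed_partitions X k xi"
    and "\<And>n. card {i \<in> {1..X n}. k n i = 0} \<le> 1"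
    and "AE \<omega> in omega X. fixation X (rand_E xi \<omega>)"
  shows "\<forall>v \<in> Vall X. rho X xi v = 1"
proof
  fix v assume "v \<in> Vall X"
  then have v: "v \<in> Vlev X (fst v)" by (auto simp: Vall_def Vlev_def)
  let ?Y = "\<lambda>\<omega>. vperm (rand_perm \<omega>) v"
  let ?S = "\<lambda>w. {\<omega> \<in> space (omega X). decodes_to X (fst v) (snd v) w (observed_graph xi \<omega>)}"
  interpret prob_space "omega X" by (rule prob_space_omega)
  have determined:
    "AE \<omega> in omega X. ?Y \<omega> \<in> Vlev X (fst v) \<and> (\<forall>w\<in>Vlev X (fst v). ?Y \<omega> = w \<longleftrightarrow> \<omega> \<in> ?S w)"
    using AE_omega_permutes assms(4) AE_space
  proof eventually_elim
    case (elim \<omega>)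
    interpret relabelled_lookdown X k xi "\<lambda>n. fst (\<omega> n)" "\<lambda>n. snd (\<omega> n)"
      using assms elim by unfold_locales auto
    show ?case
      using vperm_eq_iff_decodes_to elim v vperm_in_Vlev_iff
      by (simp add: rand_perm_def rand_E_def observed_graph_def)
  qed
  have sets_Y: "{\<omega> \<in> space (omega X). ?Y \<omega> = w} \<in> sets (omega X)" for w
    unfolding vperm_def rand_perm_def by (rule predE, rule pred_omega_component)
  show "rho X xi v = 1"
    unfolding rho_def
  proof (rule integral_Max_cond_prob_eq_1)
    show "?S w \<in> sets (obs_algebra X xi)" if "w \<in> Vlev X (fst v)" for w
      using that by (rule sets_obs_decodes_to)
  qed (fact subalgebra_obs_algebra finite_Vlev sets_Y determined)+
qed

end
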